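(* Let $\xi\in\mathbb{D}=\{z\in\mathbb{C}:|z|<1\}$ with $\xi\neq 0$, and let $z\in\mathbb{D}\setminus\{\xi\}$. Put $b(z,\xi)=\dfrac{\bar\xi(\xi-z)}{1-z\bar\xi}$ and $A(z,\xi)=\dfrac{1-|\xi|^2}{1-z\bar\xi}$. Then $$|\arg b(z,\xi)|\le \pi\min\bigl\{|A(z,\xi)|,\,1\bigr\}.$$
   Context: Here $\arg w$ denotes the value of the argument of $w\neq 0$ lying in $[-\pi,\pi)$ (so it is the principal argument, except that on the negative real axis the value $-\pi$ is taken). *)

theory Defs
  imports "HOL-Analysis.Analysis"
begin

definition arg_m :: "complex \<Rightarrow> real" where
  "arg_m w = (if Arg w = pi then - pi else Arg w)"

definition bfun :: "complex \<Rightarrow> complex \<Rightarrow> complex" where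
  "bfun z \<xi> = cnj \<xi> * (\<xi> - z) / (1 - z * cnj \<xi>)"

definition Afun :: "complex \<Rightarrow> complex \<Rightarrow> complex" where
  "Afun z \<xi> = (1 - (norm \<xi>)\<^sup>2) / (1 - z * cnj \<xi>)"

end

theory Submission
  imports Defs
begin

text \<open>Since \<open>b(z,\<xi>) = 1 - A(z,\<xi>)\<close>, it suffices to bound \<open>|Arg (1 - w)|\<close> by \<open>\<pi> min {|w|, 1}\<close>.
  The bound by \<open>\<pi>\<close> is trivial. For \<open>|w| < 1\<close> the point \<open>1 - w\<close> lies in the right half-plane,
  so \<open>|Arg (1 - w)| < \<pi>/2\<close>, which settles \<open>|w| \<ge> 1/2\<close>; for \<open>|w| < 1/2\<close> we have
  \<open>|Arg (1 - w)| = arctan (|Im w| / (1 - Re w)) \<le> 2|w| \<le> \<pi>|w|\<close>.\<close>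

lemma abs_arg_m_eq_abs_Arg: "\<bar>arg_m w\<bar> = \<bar>Arg w\<bar>"
  unfolding arg_m_def by auto

lemma abs_Arg_le_pi: "\<bar>Arg w\<bar> \<le> pi"
  using mpi_less_Arg[of w] Arg_le_pi[of w] by auto

lemma Arg_one_minus_eq_arctan:
  assumes "norm w < 1"
  shows "Arg (1 - w) = arctan (Im (1 - w) / Re (1 - w))"
proof (rule arg_conv_arctan)
  show "Re (1 - w) > 0" using assms abs_Re_le_cmod[of w] by auto
qed

lemma abs_Arg_one_minus_less_pi_half:
  assumes "norm w < 1"
  shows "\<bar>Arg (1 - w)\<bar> < pi / 2"
  unfolding Arg_one_minus_eq_arctan[OF assms] abs_arctan using arctan_ubound by blast

lemma abs_Arg_one_minus_le_two_norm:
  assumes "norm w < 1/2"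
  shows "\<bar>Arg (1 - w)\<bar> \<le> 2 * norm w"
proof -
  have Re: "\<bar>Re w\<bar> \<le> norm w" and Im: "\<bar>Im w\<bar> \<le> norm w"
    by (simp_all add: abs_Re_le_cmod abs_Im_le_cmod)
  have "\<bar>Im (1 - w) / Re (1 - w)\<bar> = \<bar>Im w\<bar> / (1 - Re w)"
    using assms Re by (simp add: abs_divide)
  also have "\<dots> \<le> norm w / (1/2)"
    by (rule frac_le) (use assms Re Im in auto)
  finally have "\<bar>Im (1 - w) / Re (1 - w)\<bar> \<le> 2 * norm w" by simp
  moreover have "\<bar>Arg (1 - w)\<bar> = arctan \<bar>Im (1 - w) / Re (1 - w)\<bar>"
    using assms Arg_one_minus_eq_arctan[of w] abs_arctan by simp
  ultimately show ?thesis
    using arctan_le_self[of "\<bar>Im (1 - w) / Re (1 - w)\<bar>"] by linarith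
qed

lemma abs_Arg_one_minus_le:
  "\<bar>Arg (1 - w)\<bar> \<le> pi * min (norm w) 1"
proof (cases "norm w < 1")
  case False
  then show ?thesis using abs_Arg_le_pi[of "1 - w"] by auto
next
  case True
  have "\<bar>Arg (1 - w)\<bar> \<le> pi * norm w"
  proof (cases "norm w < 1/2")
    case True
    then have "\<bar>Arg (1 - w)\<bar> \<le> 2 * norm w" by (rule abs_Arg_one_minus_le_two_norm)
    also have "\<dots> \<le> pi * norm w" using pi_gt3 by (simp add: mult_right_mono)
    finally show ?thesis .
  next
    case False
    then have "pi / 2 \<le> pi * norm w" by simp
    then show ?thesis using abs_Arg_one_minus_less_pi_half[OF \<open>norm w < 1\<close>] by linarith
  qed
  then show ?thesis using True by simp
qed

lemma bfun_eq_one_minus_Afun: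
  assumes "z * cnj \<xi> \<noteq> 1"
  shows "bfun z \<xi> = 1 - Afun z \<xi>"
proof -
  have "\<xi> * cnj \<xi> = (complex_of_real (norm \<xi>))\<^sup>2"
    using complex_norm_square[of \<xi>] by simp
  with assms show ?thesis
    unfolding bfun_def Afun_def by (simp add: field_simps)
qed

theorem lemma1:
  fixes z \<xi> :: complex
  assumes "norm \<xi> < 1" and "\<xi> \<noteq> 0" and "norm z < 1" and "z \<noteq> \<xi>"
  shows "\<bar>arg_m (bfun z \<xi>)\<bar> \<le> pi * min (norm (Afun z \<xi>)) 1"
proof -
  have "norm (z * cnj \<xi>) < 1"
    using assms(1,3) by (simp add: norm_mult) (metis mult_strict_mono' norm_ge_zero mult_1_right)
  then have "z * cnj \<xi> \<noteq> 1" by auto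
  then show ?thesis
    using bfun_eq_one_minus_Afun abs_Arg_one_minus_le abs_arg_m_eq_abs_Arg by simp
qed

end
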